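(* Let $p,q$ be fixed distinct propositional letters (only $p$ is used). Define $p^0:=p$ and $p^{n+1}:=p\to p^n$, and for $T\subseteq\omega$ let $K_T=\{p\looparrowright p^k:k\in T\}$. Then: (i) for every non-empty $T\subseteq\omega\setminus\{0\}$, the logic $\mathcal{F}K_T$ is Epstein complete; more precisely, $\mathcal{F}K_T=\{\varphi\in\mathsf{FOR}:\mathfrak{R}\vDash\varphi\text{ for all }\mathfrak{R}\in\mathsf{R}^T\}$, where $\mathfrak{R}^T_0=\{\langle\sigma(p),\sigma(p^k)\rangle:\sigma\text{ a substitution},\ k\in T\}$ and $\mathsf{R}^T=\{\mathfrak{R}\subseteq\mathsf{FOR}^2:\mathfrak{R}^T_0\subseteq\mathfrak{R}\}$; (ii) for non-empty $T,V\subseteq\omega\setminus\{0\}$ with $T\neq V$ we have $\mathcal{F}K_T\neq\mathcal{F}K_V$. Consequently there are exactly $2^{\aleph_0}$ Epstein complete logics (extensions of $\mathcal{F}$).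
   Context: Language: propositional letters $\Phi=\{p_0,p_1,\dots\}$; connectives $\neg$ (unary), $\lor,\wedge,\to,\leftrightarrow,\vartriangle,\looparrowright$ (binary); $\mathsf{FOR}$ the set of all formulas. A substitution is an endomorphism of the free formula algebra (determined by an arbitrary map $\Phi\to\mathsf{FOR}$). An Epstein model is $\langle v,\mathfrak{R}\rangle$ with $v:\Phi\to\{0,1\}$ and $\mathfrak{R}\subseteq\mathsf{FOR}^2$; truth: letters via $v$, boolean connectives classical, $\langle v,\mathfrak{R}\rangle\vDash\varphi\vartriangle\psi$ iff both $\varphi,\psi$ true and $\langle\varphi,\psi\rangle\in\mathfrak{R}$, $\langle v,\mathfrak{R}\rangle\vDash\varphi\looparrowright\psi$ iff $\varphi\to\psi$ true and $\langle\varphi,\psi\rangle\in\mathfrak{R}$. $\mathfrak{R}\vDash\varphi$ iff $\langle v,\mathfrak{R}\rangle\vDash\varphi$ for every valuation $v$. $\mathcal{F}$ is the least set of formulas containing all classical tautologies of this language (substitution instances of propositional tautologies) and the axioms $(p\looparrowright q)\to(p\to q)$ and $(p\vartriangle q)\leftrightarrow((p\looparrowright q)\wedge(p\wedge q))$, closed under uniform substitution and modus ponens; $\mathcal{F}$ coincides with the set of formulas true in all Epstein models. For $\Lambda\subseteq\mathsf{FOR}$, $\mathcal{F}\Lambda$ is the least set containing $\mathcal{F}\cup\Lambda$ closed under uniform substitution and modus ponens. A logic is a set of formulas containing $\mathcal{F}$ closed under uniform substitution and modus ponens. A logic $\lambda$ is Epstein complete iff there is a set $X$ of Epstein relations with $\lambda=\{\varphi:\mathfrak{R}\vDash\varphi\text{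 for all }\mathfrak{R}\in X\}$; otherwise Epstein incomplete. *)

theory Defs
  imports Main "HOL-Library.Equipollence"
begin

text \<open>Formulas: letters p_n = Var n; Tri = relatedness conjunction, Loop = relatedness implication.\<close>
datatype form = Var nat | Neg form | Disj form form | Conj form form | Imp form form
  | Iff form form | Tri form form | Loop form form

type_synonym rel = "(form \<times> form) set"

fun subst :: "(nat \<Rightarrow> form) \<Rightarrow> form \<Rightarrow> form" where
  "subst \<sigma> (Var n) = \<sigma> n"
| "subst \<sigma> (Neg a) = Neg (subst \<sigma> a)"
| "subst \<sigma> (Disj a b) = Disj (subst \<sigma> a) (subst \<sigma> b)"
| "subst \<sigma> (Conj a b) = Conj (subst \<sigma> a) (subst \<sigma> b)"
| "subst \<sigma> (Imp a b) = Imp (subst \<sigma> a) (subst \<sigma> b)"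
| "subst \<sigma> (Iff a b) = Iff (subst \<sigma> a) (subst \<sigma> b)"
| "subst \<sigma> (Tri a b) = Tri (subst \<sigma> a) (subst \<sigma> b)"
| "subst \<sigma> (Loop a b) = Loop (subst \<sigma> a) (subst \<sigma> b)"

fun boolean :: "form \<Rightarrow> bool" where
  "boolean (Var n) = True"
| "boolean (Neg a) = boolean a"
| "boolean (Disj a b) = (boolean a \<and> boolean b)"
| "boolean (Conj a b) = (boolean a \<and> boolean b)"
| "boolean (Imp a b) = (boolean a \<and> boolean b)"
| "boolean (Iff a b) = (boolean a \<and> boolean b)"
| "boolean (Tri a b) = False"
| "boolean (Loop a b) = False"

text \<open>Classical evaluation (only meaningful on boolean formulas).\<close>
fun evalc :: "(nat \<Rightarrow> bool) \<Rightarrow> form \<Rightarrow> bool" where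
  "evalc v (Var n) = v n"
| "evalc v (Neg a) = (\<not> evalc v a)"
| "evalc v (Disj a b) = (evalc v a \<or> evalc v b)"
| "evalc v (Conj a b) = (evalc v a \<and> evalc v b)"
| "evalc v (Imp a b) = (evalc v a \<longrightarrow> evalc v b)"
| "evalc v (Iff a b) = (evalc v a \<longleftrightarrow> evalc v b)"
| "evalc v (Tri a b) = False"
| "evalc v (Loop a b) = False"

definition prop_taut :: "form \<Rightarrow> bool" where
  "prop_taut \<phi> \<longleftrightarrow> boolean \<phi> \<and> (\<forall>v. evalc v \<phi>)"

definition class_taut :: "form set" where
  "class_taut = {subst \<sigma> \<phi> | \<sigma> \<phi>. prop_taut \<phi>}"

fun models :: "(nat \<Rightarrow> bool) \<Rightarrow> rel \<Rightarrow> form \<Rightarrow> bool" where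
  "models v R (Var n) = v n"
| "models v R (Neg a) = (\<not> models v R a)"
| "models v R (Disj a b) = (models v R a \<or> models v R b)"
| "models v R (Conj a b) = (models v R a \<and> models v R b)"
| "models v R (Imp a b) = (models v R a \<longrightarrow> models v R b)"
| "models v R (Iff a b) = (models v R a \<longleftrightarrow> models v R b)"
| "models v R (Tri a b) = (models v R a \<and> models v R b \<and> (a, b) \<in> R)"
| "models v R (Loop a b) = ((models v R a \<longrightarrow> models v R b) \<and> (a, b) \<in> R)"

definition rel_valid :: "rel \<Rightarrow> form \<Rightarrow> bool" where
  "rel_valid R \<phi> \<longleftrightarrow> (\<forall>v. models v R \<phi>)"

abbreviation pp :: form where "pp \<equiv> Var 0"
abbreviation qq :: form where "qq \<equiv> Var 1"

inductive_set FL :: "form set \<Rightarrow> form set" for \<Lambda> :: "form set" where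
  taut: "\<phi> \<in> class_taut \<Longrightarrow> \<phi> \<in> FL \<Lambda>"
| ax1: "Imp (Loop pp qq) (Imp pp qq) \<in> FL \<Lambda>"
| ax2: "Iff (Tri pp qq) (Conj (Loop pp qq) (Conj pp qq)) \<in> FL \<Lambda>"
| hyp: "\<phi> \<in> \<Lambda> \<Longrightarrow> \<phi> \<in> FL \<Lambda>"
| sub: "\<phi> \<in> FL \<Lambda> \<Longrightarrow> subst \<sigma> \<phi> \<in> FL \<Lambda>"
| mp: "\<phi> \<in> FL \<Lambda> \<Longrightarrow> Imp \<phi> \<psi> \<in> FL \<Lambda> \<Longrightarrow> \<psi> \<in> FL \<Lambda>"

definition F :: "form set" where "F = FL {}"

definition is_logic :: "form set \<Rightarrow> bool" where
  "is_logic L \<longleftrightarrow> F \<subseteq> L \<and> (\<forall>\<sigma>. \<forall>\<phi>\<in>L. subst \<sigma> \<phi> \<in> L)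
     \<and> (\<forall>\<phi> \<psi>. \<phi> \<in> L \<longrightarrow> Imp \<phi> \<psi> \<in> L \<longrightarrow> \<psi> \<in> L)"

definition epstein_complete :: "form set \<Rightarrow> bool" where
  "epstein_complete L \<longleftrightarrow> (\<exists>X :: rel set. L = {\<phi>. \<forall>R\<in>X. rel_valid R \<phi>})"

fun ppow :: "nat \<Rightarrow> form" where
  "ppow 0 = pp"
| "ppow (Suc n) = Imp pp (ppow n)"

definition K :: "nat set \<Rightarrow> form set" where
  "K T = {Loop pp (ppow k) | k. k \<in> T}"

definition R0 :: "nat set \<Rightarrow> rel" where
  "R0 T = {(subst \<sigma> pp, subst \<sigma> (ppow k)) | \<sigma> k. k \<in> T}"

definition RT :: "nat set \<Rightarrow> rel set" where
  "RT T = {R. R0 T \<subseteq> R}"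

end

theory Submission
  imports Defs "HOL-Library.Countable"
begin

text \<open>
  Soundness: the class of relations containing \<open>R0 T\<close> is closed under preimages of substitutions
  (because \<open>R0 T\<close> itself is closed under substitution), and truth of \<open>subst \<sigma> \<phi>\<close> in a relation
  is truth of \<open>\<phi>\<close> in its \<open>\<sigma>\<close>-preimage.
  Completeness: replacing the relational subformulas of \<open>\<phi>\<close> by fresh atoms turns the question
  into propositional consequence from finitely many instances of the two axioms and of
  \<open>a \<looparrowright> b\<close> for \<open>(a, b) \<in> R0 T\<close>; a refuting valuation of the atoms describes a
  relation above \<open>R0 T\<close> refuting \<open>\<phi>\<close>.
  Distinctness: \<open>p \<looparrowright> p\<^sup>k\<close> is valid in \<open>R0 V\<close> only if \<open>(p, p\<^sup>k) \<in> R0 V\<close>, i.e. \<open>k \<in> V\<close>, as a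
  substitution fixing \<open>p\<close> maps \<open>p\<^sup>j\<close> to \<open>p\<^sup>j\<close>. Hence \<open>T \<mapsto> FL (K T)\<close> is injective, while
  the language is countable.
\<close>

instance form :: countable by countable_datatype

lemma subst_Var_id [simp]: "subst Var \<phi> = \<phi>"
  by (induction \<phi>) auto

lemma subst_subst: "subst \<sigma> (subst \<tau> \<phi>) = subst (\<lambda>n. subst \<sigma> (\<tau> n)) \<phi>"
  by (induction \<phi>) auto

lemma models_boolean: "boolean \<phi> \<Longrightarrow> models v R \<phi> = evalc v \<phi>"
  by (induction \<phi>) auto

definition subst_preimage :: "(nat \<Rightarrow> form) \<Rightarrow> rel \<Rightarrow> rel" where
  "subst_preimage \<sigma> R = {(a, b). (subst \<sigma> a, subst \<sigma> b) \<in> R}"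

lemma models_subst:
  "models v R (subst \<sigma> \<phi>) = models (\<lambda>n. models v R (\<sigma> n)) (subst_preimage \<sigma> R) \<phi>"
  by (induction \<phi>) (auto simp: subst_preimage_def)

lemma rel_valid_subst: "rel_valid (subst_preimage \<sigma> R) \<phi> \<Longrightarrow> rel_valid R (subst \<sigma> \<phi>)"
  unfolding rel_valid_def by (simp add: models_subst)

lemma rel_valid_class_taut: "\<phi> \<in> class_taut \<Longrightarrow> rel_valid R \<phi>"
  unfolding class_taut_def prop_taut_def rel_valid_def
  by (auto simp: models_subst models_boolean)

lemma FL_sound:
  assumes "\<phi> \<in> FL \<Lambda>"
    and preimage_closed: "\<And>R \<sigma>. R \<in> X \<Longrightarrow> subst_preimage \<sigma> R \<in> X"
    and valid_\<Lambda>: "\<And>R \<psi>. R \<in> X \<Longrightarrow> \<psi> \<in> \<Lambda> \<Longrightarrow> rel_valid R \<psi>"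
    and "R \<in> X"
  shows "rel_valid R \<phi>"
  using assms(1,4)
proof (induction arbitrary: R rule: FL.induct)
  case (taut \<phi>)
  then show ?case by (blast intro: rel_valid_class_taut)
next
  case (sub \<phi> \<sigma>)
  then show ?case using preimage_closed by (blast intro: rel_valid_subst)
next
  case (mp \<phi> \<psi>)
  then show ?case by (auto simp: rel_valid_def)
next
  case (hyp \<phi>)
  then show ?case by (simp add: valid_\<Lambda>)
qed (auto simp: rel_valid_def)

lemma subst_preimage_in_RT: "R \<in> RT T \<Longrightarrow> subst_preimage \<sigma> R \<in> RT T"
  unfolding RT_def R0_def subst_preimage_def by (force simp: subst_subst)

lemma models_ppow: "models v R pp \<Longrightarrow> models v R (ppow n)"
  by (induction n) auto

lemma rel_valid_K: "R \<in> RT T \<Longrightarrow> \<psi> \<in> K T \<Longrightarrow> rel_valid R \<psi>"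
proof -
  assume R: "R \<in> RT T" and "\<psi> \<in> K T"
  then obtain k where k: "k \<in> T" "\<psi> = Loop pp (ppow k)" unfolding K_def by blast
  have "(subst Var pp, subst Var (ppow k)) \<in> R0 T" unfolding R0_def using k(1) by blast
  then have "(pp, ppow k) \<in> R" using R unfolding RT_def by auto
  then show ?thesis using k(2) models_ppow by (auto simp: rel_valid_def)
qed

lemma FL_K_sound: "\<phi> \<in> FL (K T) \<Longrightarrow> R \<in> RT T \<Longrightarrow> rel_valid R \<phi>"
  using FL_sound subst_preimage_in_RT rel_valid_K by metis

fun skeleton :: "form \<Rightarrow> form" where
  "skeleton (Var n) = Var (2 * n)"
| "skeleton (Neg a) = Neg (skeleton a)"
| "skeleton (Disj a b) = Disj (skeleton a) (skeleton b)"
| "skeleton (Conj a b) = Conj (skeleton a) (skeleton b)"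
| "skeleton (Imp a b) = Imp (skeleton a) (skeleton b)"
| "skeleton (Iff a b) = Iff (skeleton a) (skeleton b)"
| "skeleton (Tri a b) = Var (2 * to_nat (Tri a b) + 1)"
| "skeleton (Loop a b) = Var (2 * to_nat (Loop a b) + 1)"

definition unskeleton :: "nat \<Rightarrow> form" where
  "unskeleton n = (if even n then Var (n div 2) else from_nat (n div 2))"

lemma subst_unskeleton_skeleton: "subst unskeleton (skeleton \<phi>) = \<phi>"
  by (induction \<phi>) (auto simp: unskeleton_def)

lemma boolean_skeleton: "boolean (skeleton \<phi>)"
  by (induction \<phi>) auto

lemma FL_propositional_consequence:
  assumes "finite G" "G \<subseteq> FL \<Lambda>"
    and "\<And>w. \<forall>\<gamma>\<in>G. evalc w (skeleton \<gamma>) \<Longrightarrow> evalc w (skeleton \<phi>)"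
  shows "\<phi> \<in> FL \<Lambda>"
  using assms
proof (induction G arbitrary: \<phi> rule: finite_induct)
  case empty
  then have "prop_taut (skeleton \<phi>)"
    unfolding prop_taut_def using boolean_skeleton by auto
  then have "subst unskeleton (skeleton \<phi>) \<in> class_taut" unfolding class_taut_def by blast
  then show ?case by (simp add: subst_unskeleton_skeleton FL.taut)
next
  case (insert \<gamma> G)
  have "Imp \<gamma> \<phi> \<in> FL \<Lambda>" using insert by auto
  then show ?case using insert FL.mp by blast
qed

fun subformulas :: "form \<Rightarrow> form set" where
  "subformulas (Var n) = {Var n}"
| "subformulas (Neg a) = insert (Neg a) (subformulas a)"
| "subformulas (Disj a b) = insert (Disj a b) (subformulas a \<union> subformulas b)"
| "subformulas (Conj a b) = insert (Conj a b) (subformulas a \<union> subformulas b)"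
| "subformulas (Imp a b) = insert (Imp a b) (subformulas a \<union> subformulas b)"
| "subformulas (Iff a b) = insert (Iff a b) (subformulas a \<union> subformulas b)"
| "subformulas (Tri a b) = insert (Tri a b) (subformulas a \<union> subformulas b)"
| "subformulas (Loop a b) = insert (Loop a b) (subformulas a \<union> subformulas b)"

lemma finite_subformulas: "finite (subformulas \<phi>)"
  by (induction \<phi>) auto

lemma subformulas_refl: "\<phi> \<in> subformulas \<phi>"
  by (cases \<phi>) auto

fun relational_axioms :: "rel \<Rightarrow> form \<Rightarrow> form set" where
  "relational_axioms S (Loop a b) =
     insert (Imp (Loop a b) (Imp a b)) (if (a, b) \<in> S then {Loop a b} else {})"
| "relational_axioms S (Tri a b) =
     insert (Iff (Tri a b) (Conj (Loop a b) (Conj a b))) (if (a, b) \<in> S then {Loop a b} else {})"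
| "relational_axioms S _ = {}"

lemma finite_relational_axioms: "finite (relational_axioms S \<phi>)"
  by (cases \<phi>) auto

lemma FL_ax_instances:
  "Imp (Loop a b) (Imp a b) \<in> FL \<Lambda>"
  "Iff (Tri a b) (Conj (Loop a b) (Conj a b)) \<in> FL \<Lambda>"
  using FL.sub[OF FL.ax1, of "\<lambda>n. if n = 0 then a else b"]
    FL.sub[OF FL.ax2, of "\<lambda>n. if n = 0 then a else b"]
  by simp_all

lemma relational_axioms_FL:
  "(\<And>a b. (a, b) \<in> S \<Longrightarrow> Loop a b \<in> FL \<Lambda>) \<Longrightarrow> relational_axioms S \<phi> \<subseteq> FL \<Lambda>"
  by (cases \<phi>) (auto simp: FL_ax_instances)

text \<open>
  A valuation \<open>w\<close> of the skeleton atoms satisfying all relevant axioms is the skeleton of an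
  Epstein model above \<open>S\<close>: the odd atom of \<open>a \<looparrowright> b\<close> decides whether \<open>(a, b)\<close> is related.
\<close>

lemma models_eq_evalc_skeleton:
  assumes axioms: "\<forall>\<gamma>\<in>\<Union>(relational_axioms S ` subformulas \<phi>). evalc w (skeleton \<gamma>)"
  defines "R \<equiv> S \<union> {(a, b). w (2 * to_nat (Loop a b) + 1)}"
  shows "subformulas \<psi> \<subseteq> subformulas \<phi> \<Longrightarrow>
    models (\<lambda>n. w (2 * n)) R \<psi> = evalc w (skeleton \<psi>)"
proof (induction \<psi>)
  have related_iff: "(a, b) \<in> R \<longleftrightarrow> w (2 * to_nat (Loop a b) + 1)"
    if "\<rho> \<in> subformulas \<phi>" "(a, b) \<in> S \<Longrightarrow> Loop a b \<in> relational_axioms S \<rho>" for a b \<rho>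
    using that axioms by (force simp: R_def)
  {
    case (Loop a b)
    then have "Loop a b \<in> subformulas \<phi>" using subformulas_refl by blast
    with Loop axioms related_iff[of "Loop a b"] show ?case by fastforce
  next
    case (Tri a b)
    then have "Tri a b \<in> subformulas \<phi>" using subformulas_refl by blast
    with Tri axioms related_iff[of "Tri a b"] show ?case by fastforce
  }
qed auto

lemma FL_complete:
  assumes Loop_S: "\<And>a b. (a, b) \<in> S \<Longrightarrow> Loop a b \<in> FL \<Lambda>"
    and valid: "\<And>R. S \<subseteq> R \<Longrightarrow> rel_valid R \<phi>"
  shows "\<phi> \<in> FL \<Lambda>"
proof (rule FL_propositional_consequence)
  let ?G = "\<Union>(relational_axioms S ` subformulas \<phi>)"
  show "finite ?G" using finite_subformulas finite_relational_axioms by auto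
  show "?G \<subseteq> FL \<Lambda>" using relational_axioms_FL[OF Loop_S] by blast
  fix w assume G: "\<forall>\<gamma>\<in>?G. evalc w (skeleton \<gamma>)"
  let ?R = "S \<union> {(a, b). w (2 * to_nat (Loop a b) + 1)}"
  have "models (\<lambda>n. w (2 * n)) ?R \<phi>" using valid[of ?R] by (auto simp: rel_valid_def)
  then show "evalc w (skeleton \<phi>)" using models_eq_evalc_skeleton[OF G, of \<phi>] by simp
qed

lemma Loop_R0_in_FL: "(a, b) \<in> R0 T \<Longrightarrow> Loop a b \<in> FL (K T)"
proof -
  assume "(a, b) \<in> R0 T"
  then obtain \<sigma> k where "a = subst \<sigma> pp" "b = subst \<sigma> (ppow k)" "k \<in> T"
    unfolding R0_def by blast
  moreover have "Loop pp (ppow k) \<in> FL (K T)"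
    using \<open>k \<in> T\<close> by (auto simp: K_def intro: FL.hyp)
  ultimately show ?thesis using FL.sub[of "Loop pp (ppow k)" "K T" \<sigma>] by simp
qed

theorem FL_K_eq_valid_RT: "FL (K T) = {\<phi>. \<forall>R \<in> RT T. rel_valid R \<phi>}"
  using FL_K_sound FL_complete[OF Loop_R0_in_FL] unfolding RT_def by blast

lemma epstein_complete_FL_K: "epstein_complete (FL (K T))"
  unfolding epstein_complete_def using FL_K_eq_valid_RT by blast

lemma subst_ppow_eq_ppow: "subst \<sigma> (ppow j) = ppow k \<Longrightarrow> \<sigma> 0 = pp \<Longrightarrow> j = k"
proof (induction j arbitrary: k)
  case 0
  then show ?case by (cases k) auto
next
  case (Suc j)
  then show ?case by (cases k) auto
qed

lemma Loop_ppow_in_FL_K: "Loop pp (ppow k) \<in> FL (K V) \<longleftrightarrow> k \<in> V"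
proof
  assume "Loop pp (ppow k) \<in> FL (K V)"
  then have "rel_valid (R0 V) (Loop pp (ppow k))" using FL_K_sound by (simp add: RT_def)
  then have "(pp, ppow k) \<in> R0 V" by (simp add: rel_valid_def)
  then obtain \<sigma> j where "pp = subst \<sigma> pp" "ppow k = subst \<sigma> (ppow j)" "j \<in> V"
    unfolding R0_def by blast
  then show "k \<in> V" using subst_ppow_eq_ppow by (metis subst.simps(1))
qed (auto simp: K_def intro: FL.hyp)

lemma inj_FL_K: "inj (\<lambda>T. FL (K T))"
  by (rule injI) (use Loop_ppow_in_FL_K in blast)

lemma FL_mono: "\<phi> \<in> FL A \<Longrightarrow> A \<subseteq> B \<Longrightarrow> \<phi> \<in> FL B"
  by (induction rule: FL.induct)
    (auto intro: FL.taut FL.hyp FL.sub FL.mp FL.ax1[simplified] FL.ax2[simplified])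

lemma is_logic_FL: "is_logic (FL \<Lambda>)"
  unfolding is_logic_def F_def using FL_mono FL.sub FL.mp by blast

lemma set_of_form_sets_lepoll: "(A :: form set set) \<lesssim> (UNIV :: nat set set)"
proof -
  have "inj_on (\<lambda>L. to_nat ` L) A" by (rule inj_onI) (simp add: inj_image_eq_iff)
  then show ?thesis unfolding lepoll_def by blast
qed

theorem mainTheorem3:
  shows "(\<forall>T :: nat set. T \<noteq> {} \<and> 0 \<notin> T \<longrightarrow>
            epstein_complete (FL (K T)) \<and>
            FL (K T) = {\<phi>. \<forall>R \<in> RT T. rel_valid R \<phi>})
       \<and> (\<forall>T V :: nat set. T \<noteq> {} \<and> 0 \<notin> T \<and> V \<noteq> {} \<and> 0 \<notin> V \<and> T \<noteq> V \<longrightarrow>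
            FL (K T) \<noteq> FL (K V))
       \<and> {L. is_logic L \<and> epstein_complete L} \<approx> (UNIV :: nat set set)"
proof (intro conjI allI impI)
  fix T V :: "nat set"
  show "epstein_complete (FL (K T))" by (rule epstein_complete_FL_K)
  show "FL (K T) = {\<phi>. \<forall>R \<in> RT T. rel_valid R \<phi>}" by (rule FL_K_eq_valid_RT)
  assume "T \<noteq> {} \<and> 0 \<notin> T \<and> V \<noteq> {} \<and> 0 \<notin> V \<and> T \<noteq> V"
  then show "FL (K T) \<noteq> FL (K V)" using inj_FL_K by (auto dest: injD)
next
  have "range (\<lambda>T. FL (K T)) \<subseteq> {L. is_logic L \<and> epstein_complete L}"
    using is_logic_FL epstein_complete_FL_K by blast
  then have "(UNIV :: nat set set) \<lesssim> {L. is_logic L \<and> epstein_complete L}"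
    unfolding lepoll_def using inj_FL_K by blast
  then show "{L. is_logic L \<and> epstein_complete L} \<approx> (UNIV :: nat set set)"
    by (rule lepoll_antisym[OF set_of_form_sets_lepoll])
qed

end
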